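(* Let $\phi_1,\phi_2:\mathbb R^n\to\mathbb R$ both satisfy the standing assumption, let $f_1,f_2:\mathbb R^n\to\overline{\mathbb R}$ be proper, lsc, convex, with $f_i$ a-smooth relative to $\phi_i$ ($i=1,2$), and let $a_1,a_2>0$. Assume that one of $f_1,f_2$ is bounded below and the other is coercive, or that one of them is super-coercive. Then $(a_1\star f_1)\,\square\,(a_2\star f_2)$ is a-smooth relative to the reference function $\phi:=(a_1\star\phi_1)\,\square\,(a_2\star\phi_2)$.
   Context: Standing assumption on a reference function $\psi:\mathbb R^n\to\mathbb R$: convex, finite-valued, differentiable and strictly convex (Legendre with full domain), super-coercive ($\psi(x)/\|x\|\to\infty$). Epi-scaling: $(a\star f)(x)=af(x/a)$. Infimal convolution: $(g\,\square\,h)(x)=\inf_y g(y)+h(x-y)$. Coercive: $f(x)\to\infty$ as $\|x\|\to\infty$. A proper lsc $h$ is a-weakly convex relative to $\psi$ if for every $(\bar x,\bar v)\in\operatorname{graph}\partial h$ (limiting subdifferential): $h(x)\ge h(\bar x)-\psi(x-\bar x+\nabla\psi^*(-\bar v))+\psi(\nabla\psi^*(-\bar v))$ for all $x$; $f$ is a-smooth relative to $\psi$ if $f$ is real-valued, continuously differentiable, and both $f$ and $-f$ are a-weakly convex relative to $\psi$. *)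

theory Defs
  imports "HOL-Analysis.Analysis"
begin

definition proper_fun :: "('a \<Rightarrow> ereal) \<Rightarrow> bool" where
  "proper_fun f \<longleftrightarrow> (\<forall>x. f x \<noteq> -\<infinity>) \<and> (\<exists>x. f x \<noteq> \<infinity>)"

definition lsc_fun :: "('a::topological_space \<Rightarrow> ereal) \<Rightarrow> bool" where
  "lsc_fun f \<longleftrightarrow> (\<forall>x c. c < f x \<longrightarrow> eventually (\<lambda>y. c < f y) (at x))"

definition convex_fun :: "('a::real_vector \<Rightarrow> ereal) \<Rightarrow> bool" where
  "convex_fun f \<longleftrightarrow> (\<forall>x y t. 0 < t \<and> t < 1 \<longrightarrow>
     f ((1 - t) *\<^sub>R x + t *\<^sub>R y) \<le> ereal (1 - t) * f x + ereal t * f y)"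

definition coercive_fun :: "('a::real_normed_vector \<Rightarrow> ereal) \<Rightarrow> bool" where
  "coercive_fun f \<longleftrightarrow> (f \<longlongrightarrow> \<infinity>) at_infinity"

definition supercoercive_fun :: "('a::real_normed_vector \<Rightarrow> ereal) \<Rightarrow> bool" where
  "supercoercive_fun f \<longleftrightarrow> ((\<lambda>x. f x / ereal (norm x)) \<longlongrightarrow> \<infinity>) at_infinity"

definition bounded_below_fun :: "('a \<Rightarrow> ereal) \<Rightarrow> bool" where
  "bounded_below_fun f \<longleftrightarrow> (\<exists>c::real. \<forall>x. ereal c \<le> f x)"

definition strictly_convex_real :: "('a::real_vector \<Rightarrow> real) \<Rightarrow> bool" where
  "strictly_convex_real \<psi> \<longleftrightarrow> (\<forall>x y t. x \<noteq> y \<and> 0 < t \<and> t < 1 \<longrightarrow>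
     \<psi> ((1 - t) *\<^sub>R x + t *\<^sub>R y) < (1 - t) * \<psi> x + t * \<psi> y)"

text \<open>Standing assumption on a reference function: convex, finite, differentiable,
  strictly convex (Legendre with full domain), super-coercive.\<close>
definition reference_fun :: "('a::euclidean_space \<Rightarrow> real) \<Rightarrow> bool" where
  "reference_fun \<psi> \<longleftrightarrow> convex_on UNIV \<psi> \<and> (\<forall>x. \<psi> differentiable at x)
     \<and> strictly_convex_real \<psi> \<and> supercoercive_fun (\<lambda>x. ereal (\<psi> x))"

definition grad :: "('a::euclidean_space \<Rightarrow> real) \<Rightarrow> 'a \<Rightarrow> 'a" where
  "grad g x = (THE v. (g has_derivative (\<lambda>h. v \<bullet> h)) (at x))"

text \<open>Convex (Fenchel) conjugate; finite for super-coercive functions.\<close>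
definition conj_fun :: "('a::euclidean_space \<Rightarrow> real) \<Rightarrow> 'a \<Rightarrow> real" where
  "conj_fun \<psi> y = (SUP x. y \<bullet> x - \<psi> x)"

definition epi_scale :: "real \<Rightarrow> ('a::real_vector \<Rightarrow> ereal) \<Rightarrow> 'a \<Rightarrow> ereal" where
  "epi_scale a f x = ereal a * f (x /\<^sub>R a)"

definition infconv :: "('a::real_vector \<Rightarrow> ereal) \<Rightarrow> ('a \<Rightarrow> ereal) \<Rightarrow> 'a \<Rightarrow> ereal" where
  "infconv g h x = (INF y. g y + h (x - y))"

definition frechet_subdiff :: "('a::euclidean_space \<Rightarrow> ereal) \<Rightarrow> 'a \<Rightarrow> 'a set" where
  "frechet_subdiff h x = {v. \<bar>h x\<bar> \<noteq> \<infinity> \<and>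
     (\<forall>e>0. \<exists>d>0. \<forall>y. norm (y - x) < d \<longrightarrow>
        h x + ereal (v \<bullet> (y - x) - e * norm (y - x)) \<le> h y)}"

definition limiting_subdiff :: "('a::euclidean_space \<Rightarrow> ereal) \<Rightarrow> 'a \<Rightarrow> 'a set" where
  "limiting_subdiff h x = {v. \<bar>h x\<bar> \<noteq> \<infinity> \<and> (\<exists>xs vs. xs \<longlonglongrightarrow> x \<and> (\<lambda>k. h (xs k)) \<longlonglongrightarrow> h x \<and>
     (\<forall>k. vs k \<in> frechet_subdiff h (xs k)) \<and> vs \<longlonglongrightarrow> v)}"

definition a_weakly_convex_rel :: "('a::euclidean_space \<Rightarrow> real) \<Rightarrow> ('a \<Rightarrow> ereal) \<Rightarrow> bool" where
  "a_weakly_convex_rel \<psi> h \<longleftrightarrow>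
     (\<forall>xb vb. vb \<in> limiting_subdiff h xb \<longrightarrow>
        (\<forall>x. h x \<ge> h xb - ereal (\<psi> (x - xb + grad (conj_fun \<psi>) (- vb)))
                      + ereal (\<psi> (grad (conj_fun \<psi>) (- vb)))))"

definition a_smooth_rel :: "('a::euclidean_space \<Rightarrow> real) \<Rightarrow> ('a \<Rightarrow> ereal) \<Rightarrow> bool" where
  "a_smooth_rel \<psi> f \<longleftrightarrow> (\<forall>x. \<bar>f x\<bar> \<noteq> \<infinity>) \<and>
     (\<exists>G. (\<forall>x. ((\<lambda>y. real_of_ereal (f y)) has_derivative (\<lambda>h. G x \<bullet> h)) (at x))
          \<and> continuous_on UNIV G) \<and>
     a_weakly_convex_rel \<psi> f \<and> a_weakly_convex_rel \<psi> (\<lambda>x. - f x)"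

end

theory Submission
  imports Defs
begin

(* Under the growth hypothesis the infimum defining F = (a1 \<star> f1) \<box> (a2 \<star> f2) is attained.
   At an optimal split x = y + (x - y) the gradients of f1 at y / a1 and of f2 at (x - y) / a2
   coincide, and this common value g is the gradient of F at x: near x, F lies above its tangent
   (the fi are convex) and below a1 f1 ((y + d) / a1) + a2 f2 ((x - y) / a2).
   The same holds for Phi = (a1 \<star> phi1) \<box> (a2 \<star> phi2). Since grad phii* inverts grad phii,
   the gradient of the conjugate of Phi at g is a1 grad phi1*(g) + a2 grad phi2*(g), where Phi
   splits into the pieces phii (grad phii*(g)).
   For continuously differentiable functions the limiting subdifferential is the gradient, so
   relative smoothness of fi is an upper bound of fi by a shifted copy of phii. Inf-convolving the
   two bounds gives the upper bound of F by a shifted copy of Phi; the lower bound is convexity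
   of F. *)

section \<open>Gradients and convexity\<close>

lemma grad_eqI:
  fixes f :: "'a::euclidean_space \<Rightarrow> real"
  assumes "(f has_derivative (\<lambda>h. v \<bullet> h)) (at x)"
  shows "grad f x = v"
  unfolding grad_def
proof (rule the_equality)
  show "(f has_derivative (\<lambda>h. v \<bullet> h)) (at x)" by (fact assms)
  fix w assume "(f has_derivative (\<lambda>h. w \<bullet> h)) (at x)"
  then have "(\<lambda>h. w \<bullet> h) = (\<lambda>h. v \<bullet> h)" using assms by (rule has_derivative_unique)
  then have "w \<bullet> (w - v) = v \<bullet> (w - v)" by metis
  then have "(w - v) \<bullet> (w - v) = 0" by (simp add: inner_diff_left)
  then show "w = v" by simp
qed

lemma has_derivative_grad:
  fixes f :: "'a::euclidean_space \<Rightarrow> real"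
  assumes "f differentiable at x"
  shows "(f has_derivative (\<lambda>h. grad f x \<bullet> h)) (at x)"
proof -
  obtain D where D: "(f has_derivative D) (at x)"
    using assms by (auto simp: differentiable_def)
  have "D = (\<lambda>h. adjoint D 1 \<bullet> h)"
  proof
    fix h
    have "linear D" using D by (rule has_derivative_linear)
    from adjoint_works[OF this, of h 1] show "D h = adjoint D 1 \<bullet> h"
      by (simp add: inner_commute)
  qed
  with D have "(f has_derivative (\<lambda>h. adjoint D 1 \<bullet> h)) (at x)" by simp
  with grad_eqI[OF this] show ?thesis by simp
qed

lemma has_derivative_zero_at_minimum:
  fixes f :: "'a::real_inner \<Rightarrow> real"
  assumes "(f has_derivative (\<lambda>h. v \<bullet> h)) (at y)" and "\<And>y'. f y \<le> f y'"
  shows "v = 0"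
proof -
  have "(\<lambda>h. v \<bullet> h) = (\<lambda>h. 0)"
    by (rule has_derivative_local_min[OF assms(1)]) (simp add: assms(2))
  then have "v \<bullet> v = 0" by metis
  then show ?thesis by simp
qed

lemma convex_fun_ereal_iff: "convex_fun (\<lambda>x. ereal (f x)) \<longleftrightarrow> convex_on UNIV f"
proof
  assume "convex_fun (\<lambda>x. ereal (f x))"
  then show "convex_on UNIV f" by (intro convex_onI) (auto simp: convex_fun_def)
next
  assume cvx: "convex_on UNIV f"
  show "convex_fun (\<lambda>x. ereal (f x))"
    unfolding convex_fun_def
  proof (intro allI impI)
    fix x y and t :: real assume "0 < t \<and> t < 1"
    then show "ereal (f ((1 - t) *\<^sub>R x + t *\<^sub>R y)) \<le> ereal (1 - t) * ereal (f x) + ereal t * ereal (f y)"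
      using convex_onD[OF cvx, of t x y] by simp
  qed
qed

lemma convex_on_above_tangent_inner:
  fixes f :: "'a::real_inner \<Rightarrow> real"
  assumes cvx: "convex_on UNIV f" and deriv: "(f has_derivative (\<lambda>h. g \<bullet> h)) (at z)"
  shows "f z + g \<bullet> (w - z) \<le> f w"
proof -
  define l where "l t = f (z + t *\<^sub>R (w - z))" for t :: real
  have "convex_on UNIV l"
  proof (rule convex_onI)
    fix t s1 s2 :: real assume "0 < t" "t < 1"
    have "z + ((1 - t) *\<^sub>R s1 + t *\<^sub>R s2) *\<^sub>R (w - z)
        = (1 - t) *\<^sub>R (z + s1 *\<^sub>R (w - z)) + t *\<^sub>R (z + s2 *\<^sub>R (w - z))"
      by (simp add: algebra_simps)
    then show "l ((1 - t) *\<^sub>R s1 + t *\<^sub>R s2) \<le> (1 - t) * l s1 + t * l s2"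
      using convex_onD[OF cvx, of t] \<open>0 < t\<close> \<open>t < 1\<close> by (simp add: l_def)
  qed simp
  moreover have "(l has_field_derivative (g \<bullet> (w - z))) (at 0)"
  proof -
    have "((\<lambda>t. z + t *\<^sub>R (w - z)) has_derivative (\<lambda>t. t *\<^sub>R (w - z))) (at 0)"
      by (auto intro!: derivative_eq_intros)
    moreover have "(f has_derivative (\<lambda>h. g \<bullet> h)) (at (z + 0 *\<^sub>R (w - z)))"
      using deriv by simp
    ultimately have "(l has_derivative (\<lambda>t. g \<bullet> (t *\<^sub>R (w - z)))) (at 0)"
      unfolding l_def by (rule has_derivative_compose)
    then show ?thesis
      unfolding has_field_derivative_def
      by (rule has_derivative_eq_rhs) (simp add: fun_eq_iff inner_scaleR_right)
  qed
  ultimately have "g \<bullet> (w - z) * (1 - 0) \<le> l 1 - l 0"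
    by (intro convex_on_imp_above_tangent) auto
  then show ?thesis by (simp add: l_def)
qed

lemma convex_gradient_continuous:
  fixes f :: "'a::real_inner \<Rightarrow> real"
  assumes deriv: "\<And>x. (f has_derivative (\<lambda>h. D x \<bullet> h)) (at x)"
    and tangent: "\<And>x y. f x + D x \<bullet> (y - x) \<le> f y"
  shows "continuous_on UNIV D"
  unfolding continuous_on_iff
proof (intro ballI allI impI)
  fix x0 :: 'a and e :: real assume "0 < e"
  then obtain r where "0 < r" and
    r: "\<And>y. norm (y - x0) < r \<Longrightarrow> norm (f y - f x0 - D x0 \<bullet> (y - x0)) \<le> e / 4 * norm (y - x0)"
    using deriv[of x0] unfolding has_derivative_at_alt by (meson divide_pos_pos zero_less_numeral)
  have close: "norm (D x - D x0) \<le> e / 2" if x: "norm (x - x0) < r / 2" for x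
  proof (cases "D x = D x0")
    case False
    define t where "t = r / 2"
    define u where "u = (D x - D x0) /\<^sub>R norm (D x - D x0)"
    define y where "y = x + t *\<^sub>R u"
    have "0 < t" "norm u = 1" using \<open>0 < r\<close> False by (auto simp: t_def u_def)
    have Du: "(D x - D x0) \<bullet> u = norm (D x - D x0)"
      using False by (simp add: u_def inner_scaleR_right dot_square_norm power2_eq_square)
    have "norm (y - x0) \<le> norm (x - x0) + norm (t *\<^sub>R u)"
      unfolding y_def by (metis add_diff_eq diff_add_eq norm_triangle_ineq add.commute)
    then have y: "norm (y - x0) < 2 * t" using x \<open>norm u = 1\<close> \<open>0 < t\<close> by (simp add: t_def)
    \<comment> \<open>the tangents at x and x0 bound the jump of D by the linearisation error at x0\<close>
    have "f x + D x \<bullet> (y - x) \<le> f y" "f x0 + D x0 \<bullet> (x - x0) \<le> f x" by (fact tangent)+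
    then have "t * ((D x - D x0) \<bullet> u) \<le> f y - f x0 - D x0 \<bullet> (y - x0)"
      by (simp add: y_def inner_diff_left inner_diff_right inner_add_right algebra_simps)
    also have "\<dots> \<le> e / 4 * norm (y - x0)"
      using r[of y] y abs_ge_self[of "f y - f x0 - D x0 \<bullet> (y - x0)"]
      unfolding real_norm_def t_def by linarith
    also have "\<dots> \<le> e / 4 * (2 * t)" using y \<open>0 < e\<close> by simp
    finally show ?thesis using \<open>0 < t\<close> Du by (simp add: field_simps)
  qed (use \<open>0 < e\<close> in simp)
  have "dist (D x) (D x0) < e" if "dist x x0 < r / 2" for x
    using close[of x] that \<open>0 < e\<close> by (simp add: dist_norm)
  with \<open>0 < r\<close> show "\<exists>d>0. \<forall>x\<in>UNIV. dist x x0 < d \<longrightarrow> dist (D x) (D x0) < e"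
    by (intro exI[of _ "r / 2"]) auto
qed

lemma has_derivative_squeeze:
  fixes F f :: "'a::real_inner \<Rightarrow> real"
  assumes lower: "\<And>y. F x + g \<bullet> (y - x) \<le> F y"
    and upper: "\<And>d. F (x + d) \<le> F x + a * (f (u + d /\<^sub>R a) - f u)"
    and "0 < a" and deriv: "(f has_derivative (\<lambda>h. g \<bullet> h)) (at u)"
  shows "(F has_derivative (\<lambda>h. g \<bullet> h)) (at x)"
  unfolding has_derivative_at_alt
proof (intro conjI allI impI bounded_linear_inner_right)
  fix e :: real assume "0 < e"
  with deriv obtain r where "0 < r" and
    r: "\<And>v. norm (v - u) < r \<Longrightarrow> norm (f v - f u - g \<bullet> (v - u)) \<le> e * norm (v - u)"
    unfolding has_derivative_at_alt by blast
  have "norm (F y - F x - g \<bullet> (y - x)) \<le> e * norm (y - x)" if "norm (y - x) < a * r" for y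
  proof -
    let ?v = "u + (y - x) /\<^sub>R a"
    have "norm (?v - u) = norm (y - x) / a"
      using \<open>0 < a\<close> by (simp add: divide_inverse mult.commute)
    moreover have "norm (y - x) / a < r" using that \<open>0 < a\<close> by (simp add: field_simps)
    ultimately have "f ?v - f u \<le> g \<bullet> ((y - x) /\<^sub>R a) + e * (norm (y - x) / a)"
      using r[of ?v] by (simp add: abs_le_iff)
    then have "a * (f ?v - f u) \<le> a * (g \<bullet> ((y - x) /\<^sub>R a) + e * (norm (y - x) / a))"
      using \<open>0 < a\<close> by (intro mult_left_mono) auto
    also have "\<dots> = g \<bullet> (y - x) + e * norm (y - x)"
      using \<open>0 < a\<close> by (simp add: inner_scaleR_right distrib_left)
    finally have "a * (f ?v - f u) \<le> g \<bullet> (y - x) + e * norm (y - x)" .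
    then show ?thesis using upper[of "y - x"] lower[of y] by (simp add: abs_le_iff)
  qed
  with \<open>0 < a\<close> \<open>0 < r\<close> show "\<exists>d>0. \<forall>y. norm (y - x) < d \<longrightarrow>
      norm (F y - F x - g \<bullet> (y - x)) \<le> e * norm (y - x)"
    by (intro exI[of _ "a * r"]) auto
qed

lemma convex_linear_growth:
  fixes h :: "'a::euclidean_space \<Rightarrow> real"
  assumes cvx: "convex_on UNIV h" and cont: "continuous_on UNIV h"
    and zero: "h z = 0" and pos: "\<And>w. w \<noteq> z \<Longrightarrow> 0 < h w" and "0 < \<epsilon>"
  shows "\<exists>\<delta>>0. \<forall>w. \<epsilon> \<le> norm (w - z) \<longrightarrow> \<delta> * norm (w - z) \<le> h w"
proof -
  have "sphere z \<epsilon> \<noteq> {}" using \<open>0 < \<epsilon>\<close> by simp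
  then obtain p where p: "p \<in> sphere z \<epsilon>" and min: "\<And>q. q \<in> sphere z \<epsilon> \<Longrightarrow> h p \<le> h q"
    using continuous_attains_inf[OF compact_sphere _ continuous_on_subset[OF cont]] by blast
  have "0 < h p" using pos p \<open>0 < \<epsilon>\<close> by auto
  \<comment> \<open>by convexity, h at the point where the segment from z to w meets the sphere is at most
    \<epsilon> / norm (w - z) times h w\<close>
  have "h p / \<epsilon> * norm (w - z) \<le> h w" if w: "\<epsilon> \<le> norm (w - z)" for w
  proof -
    define t where "t = \<epsilon> / norm (w - z)"
    have "0 < norm (w - z)" using w \<open>0 < \<epsilon>\<close> by linarith
    then have "0 \<le> t" "t \<le> 1" using w \<open>0 < \<epsilon>\<close> by (auto simp: t_def)
    have "(1 - t) *\<^sub>R z + t *\<^sub>R w \<in> sphere z \<epsilon>"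
      using \<open>0 < norm (w - z)\<close> \<open>0 < \<epsilon>\<close>
      by (simp add: dist_norm t_def norm_minus_commute algebra_simps flip: scaleR_diff_right)
    then have "h p \<le> (1 - t) * h z + t * h w"
      using min convex_onD[OF cvx \<open>0 \<le> t\<close> \<open>t \<le> 1\<close>] by (meson UNIV_I order_trans)
    then show ?thesis using \<open>0 < norm (w - z)\<close> \<open>0 < \<epsilon>\<close> by (simp add: zero t_def field_simps)
  qed
  with \<open>0 < h p\<close> \<open>0 < \<epsilon>\<close> show ?thesis by (intro exI[of _ "h p / \<epsilon>"]) auto
qed

section \<open>Subdifferentials of continuously differentiable functions\<close>

lemma frechet_subdiff_differentiable:
  fixes f :: "'a::euclidean_space \<Rightarrow> real"
  assumes deriv: "(f has_derivative (\<lambda>h. D \<bullet> h)) (at x)"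
  shows "frechet_subdiff (\<lambda>x. ereal (f x)) x = {D}"
proof (intro equalityI subsetI)
  show "v \<in> {D}" if v: "v \<in> frechet_subdiff (\<lambda>x. ereal (f x)) x" for v
  proof (rule ccontr)
    assume "v \<notin> {D}"
    define n where "n = norm (v - D)"
    have "0 < n" using \<open>v \<notin> {D}\<close> by (simp add: n_def)
    then obtain d1 where "0 < d1" and
      d1: "\<And>y. norm (y - x) < d1 \<Longrightarrow> f x + (v \<bullet> (y - x) - n / 4 * norm (y - x)) \<le> f y"
      using v unfolding frechet_subdiff_def by (auto dest!: spec[of _ "n / 4"])
    obtain d2 where "0 < d2" and
      d2: "\<And>y. norm (y - x) < d2 \<Longrightarrow> norm (f y - f x - D \<bullet> (y - x)) \<le> n / 4 * norm (y - x)"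
      using deriv \<open>0 < n\<close> unfolding has_derivative_at_alt by (meson divide_pos_pos zero_less_numeral)
    \<comment> \<open>along v - D, the lower bound with slope v and the upper bound with slope D are incompatible\<close>
    define t where "t = min d1 d2 / (2 * n)"
    define y where "y = x + t *\<^sub>R (v - D)"
    have "0 < t" using \<open>0 < d1\<close> \<open>0 < d2\<close> \<open>0 < n\<close> by (simp add: t_def)
    have ny: "norm (y - x) = t * n" using \<open>0 < t\<close> by (simp add: y_def n_def)
    also have "\<dots> = min d1 d2 / 2" using \<open>0 < n\<close> by (simp add: t_def)
    finally have "norm (y - x) < d1" "norm (y - x) < d2" using \<open>0 < d1\<close> \<open>0 < d2\<close> by linarith+
    have "f x + (v \<bullet> (y - x) - n / 4 * norm (y - x)) \<le> f y"
      using d1 \<open>norm (y - x) < d1\<close> .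
    moreover have "f y - f x - D \<bullet> (y - x) \<le> n / 4 * norm (y - x)"
      using d2[OF \<open>norm (y - x) < d2\<close>] abs_ge_self[of "f y - f x - D \<bullet> (y - x)"]
      unfolding real_norm_def by linarith
    ultimately have "(v - D) \<bullet> (y - x) \<le> n / 2 * norm (y - x)"
      unfolding inner_diff_left by linarith
    moreover have "(v - D) \<bullet> (y - x) = t * n * n"
      by (simp add: y_def n_def inner_scaleR_right power2_norm_eq_inner[symmetric] power2_eq_square)
    ultimately have "t * n * n \<le> t * n * (n / 2)" by (simp add: ny mult.commute mult.left_commute)
    with \<open>0 < t\<close> \<open>0 < n\<close> show False by simp
  qed
  show "v \<in> frechet_subdiff (\<lambda>x. ereal (f x)) x" if "v \<in> {D}" for v
    unfolding frechet_subdiff_def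
  proof (intro CollectI conjI allI impI)
    fix e :: real assume "0 < e"
    with deriv obtain d where "0 < d" and
      d: "\<And>y. norm (y - x) < d \<Longrightarrow> norm (f y - f x - D \<bullet> (y - x)) \<le> e * norm (y - x)"
      unfolding has_derivative_at_alt by blast
    then show "\<exists>d>0. \<forall>y. norm (y - x) < d \<longrightarrow>
        ereal (f x) + ereal (v \<bullet> (y - x) - e * norm (y - x)) \<le> ereal (f y)"
      using \<open>v \<in> {D}\<close> by (fastforce simp: abs_le_iff)
  qed simp
qed

lemma limiting_subdiff_continuously_differentiable:
  fixes f :: "'a::euclidean_space \<Rightarrow> real"
  assumes deriv: "\<And>x. (f has_derivative (\<lambda>h. D x \<bullet> h)) (at x)" and cont: "continuous_on UNIV D"
  shows "limiting_subdiff (\<lambda>x. ereal (f x)) x = {D x}"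
proof (intro equalityI subsetI)
  fix v assume "v \<in> limiting_subdiff (\<lambda>x. ereal (f x)) x"
  then obtain xs vs where xs: "xs \<longlonglongrightarrow> x" and vs: "\<And>k. vs k \<in> frechet_subdiff (\<lambda>x. ereal (f x)) (xs k)"
    and "vs \<longlonglongrightarrow> v"
    unfolding limiting_subdiff_def by blast
  have "vs = (\<lambda>k. D (xs k))"
    using vs frechet_subdiff_differentiable[OF deriv] by auto
  moreover have "(\<lambda>k. D (xs k)) \<longlonglongrightarrow> D x"
    using continuous_on_tendsto_compose[OF cont xs] by simp
  ultimately show "v \<in> {D x}" using \<open>vs \<longlonglongrightarrow> v\<close> LIMSEQ_unique by auto
next
  fix v assume "v \<in> {D x}"
  then show "v \<in> limiting_subdiff (\<lambda>x. ereal (f x)) x"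
    unfolding limiting_subdiff_def using frechet_subdiff_differentiable[OF deriv]
    by (intro CollectI conjI exI[of _ "\<lambda>k. x"] exI[of _ "\<lambda>k. v"]) auto
qed

lemma a_weakly_convex_rel_continuously_differentiable_iff:
  fixes f :: "'a::euclidean_space \<Rightarrow> real"
  assumes "\<And>x. (f has_derivative (\<lambda>h. D x \<bullet> h)) (at x)" and "continuous_on UNIV D"
  shows "a_weakly_convex_rel \<psi> (\<lambda>x. ereal (f x)) \<longleftrightarrow>
    (\<forall>xb x. f xb - \<psi> (x - xb + grad (conj_fun \<psi>) (- D xb)) + \<psi> (grad (conj_fun \<psi>) (- D xb)) \<le> f x)"
  unfolding a_weakly_convex_rel_def limiting_subdiff_continuously_differentiable[OF assms] by simp

lemma a_smooth_rel_continuously_differentiable_iff: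
  fixes f :: "'a::euclidean_space \<Rightarrow> real"
  assumes deriv: "\<And>x. (f has_derivative (\<lambda>h. D x \<bullet> h)) (at x)" and cont: "continuous_on UNIV D"
  shows "a_smooth_rel \<psi> (\<lambda>x. ereal (f x)) \<longleftrightarrow>
    (\<forall>xb x. f xb - \<psi> (x - xb + grad (conj_fun \<psi>) (- D xb)) + \<psi> (grad (conj_fun \<psi>) (- D xb)) \<le> f x) \<and>
    (\<forall>xb x. f x \<le> f xb + \<psi> (x - xb + grad (conj_fun \<psi>) (D xb)) - \<psi> (grad (conj_fun \<psi>) (D xb)))"
proof -
  have "((\<lambda>x. - f x) has_derivative (\<lambda>h. (- D x) \<bullet> h)) (at x)" for x
    using has_derivative_minus[OF deriv[of x]] by simp
  moreover have "continuous_on UNIV (\<lambda>x. - D x)" using cont by (rule continuous_on_minus)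
  ultimately have "a_weakly_convex_rel \<psi> (\<lambda>x. ereal (- f x)) \<longleftrightarrow>
      (\<forall>xb x. - f xb - \<psi> (x - xb + grad (conj_fun \<psi>) (- (- D xb))) + \<psi> (grad (conj_fun \<psi>) (- (- D xb)))
         \<le> - f x)"
    by (rule a_weakly_convex_rel_continuously_differentiable_iff)
  also have "\<dots> \<longleftrightarrow>
      (\<forall>xb x. f x \<le> f xb + \<psi> (x - xb + grad (conj_fun \<psi>) (D xb)) - \<psi> (grad (conj_fun \<psi>) (D xb)))"
    by (simp add: algebra_simps)
  finally show ?thesis
    unfolding a_smooth_rel_def a_weakly_convex_rel_continuously_differentiable_iff[OF deriv cont]
    using deriv cont by auto
qed

lemma convex_a_smooth_relE:
  fixes f :: "'a::euclidean_space \<Rightarrow> ereal"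
  assumes smooth: "a_smooth_rel \<psi> f" and convex: "convex_fun f"
  obtains fr D where "f = (\<lambda>x. ereal (fr x))" and "\<And>x. (fr has_derivative (\<lambda>h. D x \<bullet> h)) (at x)"
    and "\<And>z w. fr z + D z \<bullet> (w - z) \<le> fr w"
    and "\<And>u w. fr w \<le> fr u + \<psi> (w - u + grad (conj_fun \<psi>) (D u)) - \<psi> (grad (conj_fun \<psi>) (D u))"
proof -
  obtain fr D where f_eq: "f = (\<lambda>x. ereal (fr x))"
    and deriv: "\<And>x. (fr has_derivative (\<lambda>h. D x \<bullet> h)) (at x)" and cont: "continuous_on UNIV D"
    using smooth unfolding a_smooth_rel_def by (metis ereal_real')
  moreover have "fr z + D z \<bullet> (w - z) \<le> fr w" for z w
    using convex deriv unfolding f_eq convex_fun_ereal_iff by (rule convex_on_above_tangent_inner)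
  moreover have "fr w \<le> fr u + \<psi> (w - u + grad (conj_fun \<psi>) (D u)) - \<psi> (grad (conj_fun \<psi>) (D u))"
    for u w
    using smooth unfolding f_eq a_smooth_rel_continuously_differentiable_iff[OF deriv cont] by blast
  ultimately show ?thesis using that by blast
qed

section \<open>Coercivity\<close>

lemma coercive_funD:
  assumes "coercive_fun (\<lambda>x. ereal (f x))"
  shows "\<exists>R. \<forall>x. R \<le> norm x \<longrightarrow> M \<le> f x"
proof -
  have "\<forall>\<^sub>F x in at_infinity. ereal M < ereal (f x)"
    using assms unfolding coercive_fun_def tendsto_PInfty by blast
  then show ?thesis unfolding eventually_at_infinity by (auto intro: less_imp_le)
qed

lemma supercoercive_funD:
  assumes "supercoercive_fun (\<lambda>x. ereal (f x))"
  shows "\<exists>R. \<forall>x. R \<le> norm x \<longrightarrow> M * norm x \<le> f x"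
proof -
  have "\<forall>\<^sub>F x in at_infinity. ereal M < ereal (f x) / ereal (norm x)"
    using assms unfolding supercoercive_fun_def tendsto_PInfty by blast
  then obtain R where R: "\<And>x. R \<le> norm x \<Longrightarrow> ereal M < ereal (f x) / ereal (norm x)"
    unfolding eventually_at_infinity by blast
  have "M * norm x \<le> f x" if "max R 1 \<le> norm x" for x
  proof -
    have "0 < norm x" using that by linarith
    then have "M < f x / norm x" using R[of x] that by auto
    with \<open>0 < norm x\<close> show ?thesis by (simp add: field_simps)
  qed
  then show ?thesis by blast
qed

lemma continuous_coercive_attains_min:
  fixes f :: "'a::{heine_borel, real_normed_vector} \<Rightarrow> real"
  assumes cont: "continuous_on UNIV f" and coercive: "\<And>M. \<exists>R. \<forall>x. R \<le> norm x \<longrightarrow> M \<le> f x"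
  shows "\<exists>y. \<forall>y'. f y \<le> f y'"
proof -
  obtain R where R: "\<And>x. R \<le> norm x \<Longrightarrow> f 0 \<le> f x" using coercive by blast
  have "cball 0 \<bar>R\<bar> \<noteq> {}" by simp
  then obtain y where y: "\<And>y'. y' \<in> cball 0 \<bar>R\<bar> \<Longrightarrow> f y \<le> f y'"
    using continuous_attains_inf[OF compact_cball _ continuous_on_subset[OF cont]] by blast
  have "f y \<le> f y'" for y'
  proof (cases "norm y' \<le> \<bar>R\<bar>")
    case False
    then have "R \<le> norm y'" by linarith
    then show ?thesis using R y[of 0] by force
  qed (use y in simp)
  then show ?thesis by blast
qed

section \<open>Strong support and the gradient of the conjugate\<close>

definition support_gap :: "('a::real_inner \<Rightarrow> real) \<Rightarrow> 'a \<Rightarrow> 'a \<Rightarrow> 'a \<Rightarrow> real" where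
  "support_gap \<psi> g z w = \<psi> w - \<psi> z - g \<bullet> (w - z)"

definition strongly_supports :: "'a \<Rightarrow> ('a::real_inner \<Rightarrow> real) \<Rightarrow> 'a \<Rightarrow> bool" where
  "strongly_supports g \<psi> z \<longleftrightarrow> (\<forall>w. 0 \<le> support_gap \<psi> g z w) \<and>
     (\<forall>\<epsilon>>0. \<exists>\<delta>>0. \<forall>w. \<epsilon> \<le> norm (w - z) \<longrightarrow> \<delta> * norm (w - z) \<le> support_gap \<psi> g z w)"

lemma convex_on_support_gap:
  assumes "convex_on UNIV \<psi>"
  shows "convex_on UNIV (support_gap \<psi> g z)"
proof (rule convex_onI)
  fix t :: real and x y assume "0 < t" "t < 1"
  have "g \<bullet> ((1 - t) *\<^sub>R x + t *\<^sub>R y - z) = (1 - t) * (g \<bullet> (x - z)) + t * (g \<bullet> (y - z))"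
    by (simp add: inner_diff_right inner_add_right algebra_simps)
  then show "support_gap \<psi> g z ((1 - t) *\<^sub>R x + t *\<^sub>R y)
      \<le> (1 - t) * support_gap \<psi> g z x + t * support_gap \<psi> g z y"
    using convex_onD[OF assms, of t x y] \<open>0 < t\<close> \<open>t < 1\<close> by (simp add: support_gap_def algebra_simps)
qed simp

lemma strongly_supports_gap_nonneg:
  assumes "strongly_supports g \<psi> z"
  shows "0 \<le> support_gap \<psi> g z w"
  using assms unfolding strongly_supports_def by blast

lemma strongly_supports_above_tangent:
  assumes "strongly_supports g \<psi> z"
  shows "\<psi> z + g \<bullet> (w - z) \<le> \<psi> w"
  using strongly_supports_gap_nonneg[OF assms, of w] by (simp add: support_gap_def)

lemma strongly_supports_growth:
  assumes "strongly_supports g \<psi> z" and "0 < \<epsilon>"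
  obtains \<delta> where "0 < \<delta>" and "\<And>w. \<epsilon> \<le> norm (w - z) \<Longrightarrow> \<delta> * norm (w - z) \<le> support_gap \<psi> g z w"
  using assms unfolding strongly_supports_def by blast

lemma conj_fun_bounds:
  assumes "\<And>w. g \<bullet> w - \<psi> w \<le> g \<bullet> z - \<psi> z + e"
  shows "g \<bullet> z - \<psi> z \<le> conj_fun \<psi> g" and "conj_fun \<psi> g \<le> g \<bullet> z - \<psi> z + e"
proof -
  have "bdd_above (range (\<lambda>w. g \<bullet> w - \<psi> w))" using assms by (intro bdd_aboveI2) blast
  then show "g \<bullet> z - \<psi> z \<le> conj_fun \<psi> g" unfolding conj_fun_def by (rule cSUP_upper[OF UNIV_I])
  show "conj_fun \<psi> g \<le> g \<bullet> z - \<psi> z + e" unfolding conj_fun_def using assms by (intro cSUP_least) auto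
qed

lemma strongly_supports_perturb:
  assumes "strongly_supports g \<psi> z" and "0 < e"
  shows "\<exists>\<delta>>0. \<forall>g'. norm (g' - g) < \<delta> \<longrightarrow> (\<forall>w. g' \<bullet> w - \<psi> w \<le> g' \<bullet> z - \<psi> z + e * norm (g' - g))"
proof -
  obtain \<delta> where "0 < \<delta>" and
    far: "\<And>w. e \<le> norm (w - z) \<Longrightarrow> \<delta> * norm (w - z) \<le> support_gap \<psi> g z w"
    using strongly_supports_growth[OF assms] by blast
  have "g' \<bullet> w - \<psi> w \<le> g' \<bullet> z - \<psi> z + e * norm (g' - g)" if "norm (g' - g) < \<delta>" for g' w
  proof -
    have eq: "g' \<bullet> w - \<psi> w = g' \<bullet> z - \<psi> z + (g' - g) \<bullet> (w - z) - support_gap \<psi> g z w"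
      by (simp add: support_gap_def algebra_simps inner_diff_left inner_diff_right)
    have cs: "(g' - g) \<bullet> (w - z) \<le> norm (g' - g) * norm (w - z)" by (rule norm_cauchy_schwarz)
    \<comment> \<open>near z the perturbation is at most e * norm (g' - g); far from z the gap absorbs it\<close>
    show ?thesis
    proof (cases "e \<le> norm (w - z)")
      case True
      then have "\<delta> * norm (w - z) \<le> support_gap \<psi> g z w" by (rule far)
      moreover have "norm (g' - g) * norm (w - z) \<le> \<delta> * norm (w - z)"
        using that by (intro mult_right_mono) auto
      moreover have "0 \<le> e * norm (g' - g)" using \<open>0 < e\<close> by simp
      ultimately show ?thesis using eq cs by linarith
    next
      case False
      then have "norm (g' - g) * norm (w - z) \<le> e * norm (g' - g)"
        using mult_left_mono[of "norm (w - z)" e "norm (g' - g)"] by (simp add: mult.commute)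
      moreover have "0 \<le> support_gap \<psi> g z w"
        using assms(1) by (rule strongly_supports_gap_nonneg)
      ultimately show ?thesis using eq cs by linarith
    qed
  qed
  with \<open>0 < \<delta>\<close> show ?thesis by blast
qed

lemma grad_conj_fun_eqI:
  fixes \<psi> :: "'a::euclidean_space \<Rightarrow> real"
  assumes "strongly_supports g \<psi> z"
  shows "grad (conj_fun \<psi>) g = z"
proof (rule grad_eqI)
  have "g \<bullet> w - \<psi> w \<le> g \<bullet> z - \<psi> z + 0" for w
    using strongly_supports_above_tangent[OF assms, of w] by (simp add: inner_diff_right)
  from conj_fun_bounds[OF this] have at_g: "conj_fun \<psi> g = g \<bullet> z - \<psi> z" by simp
  show "(conj_fun \<psi> has_derivative (\<lambda>h. z \<bullet> h)) (at g)"
    unfolding has_derivative_at_alt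
  proof (intro conjI allI impI bounded_linear_inner_right)
    fix e :: real assume "0 < e"
    then obtain \<delta> where "0 < \<delta>" and
      \<delta>: "\<And>g'. norm (g' - g) < \<delta> \<Longrightarrow> \<forall>w. g' \<bullet> w - \<psi> w \<le> g' \<bullet> z - \<psi> z + e * norm (g' - g)"
      using strongly_supports_perturb[OF assms] by blast
    have "norm (conj_fun \<psi> g' - conj_fun \<psi> g - z \<bullet> (g' - g)) \<le> e * norm (g' - g)"
      if "norm (g' - g) < \<delta>" for g'
    proof -
      have "conj_fun \<psi> g' - conj_fun \<psi> g - z \<bullet> (g' - g) = conj_fun \<psi> g' - (g' \<bullet> z - \<psi> z)"
        by (simp add: at_g inner_diff_right inner_commute)
      moreover have "\<And>w. g' \<bullet> w - \<psi> w \<le> g' \<bullet> z - \<psi> z + e * norm (g' - g)"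
        using \<delta>[OF that] by blast
      note conj_fun_bounds[OF this]
      moreover have "0 \<le> e * norm (g' - g)" using \<open>0 < e\<close> by simp
      ultimately show ?thesis by (simp add: abs_le_iff)
    qed
    with \<open>0 < \<delta>\<close> show "\<exists>d>0. \<forall>g'. norm (g' - g) < d \<longrightarrow>
        norm (conj_fun \<psi> g' - conj_fun \<psi> g - z \<bullet> (g' - g)) \<le> e * norm (g' - g)"
      by blast
  qed
qed

section \<open>Reference functions\<close>

lemma reference_fun_has_derivative:
  assumes "reference_fun \<psi>"
  shows "(\<psi> has_derivative (\<lambda>h. grad \<psi> x \<bullet> h)) (at x)"
  using assms unfolding reference_fun_def by (auto intro: has_derivative_grad)

lemma reference_fun_continuous:
  assumes "reference_fun \<psi>"
  shows "continuous_on UNIV \<psi>"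
  using reference_fun_has_derivative[OF assms] has_derivative_continuous
  by (blast intro: continuous_at_imp_continuous_on)

lemma reference_fun_above_tangent:
  assumes "reference_fun \<psi>"
  shows "\<psi> z + grad \<psi> z \<bullet> (w - z) \<le> \<psi> w"
  using assms reference_fun_has_derivative[OF assms]
  unfolding reference_fun_def by (blast intro: convex_on_above_tangent_inner)

lemma reference_fun_strictly_above_tangent:
  assumes "reference_fun \<psi>" and "w \<noteq> z"
  shows "\<psi> z + grad \<psi> z \<bullet> (w - z) < \<psi> w"
proof -
  define m where "m = (1 - 1 / 2) *\<^sub>R z + (1 / 2 :: real) *\<^sub>R w"
  have strict: "\<And>x y t. x \<noteq> y \<Longrightarrow> 0 < t \<Longrightarrow> t < 1 \<Longrightarrow>
      \<psi> ((1 - t) *\<^sub>R x + t *\<^sub>R y) < (1 - t) * \<psi> x + t * \<psi> y"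
    using assms(1) unfolding reference_fun_def strictly_convex_real_def by blast
  have "\<psi> m < (1 - 1 / 2) * \<psi> z + 1 / 2 * \<psi> w"
    unfolding m_def using \<open>w \<noteq> z\<close> by (intro strict) auto
  moreover have "\<psi> z + grad \<psi> z \<bullet> (m - z) \<le> \<psi> m" by (rule reference_fun_above_tangent[OF assms(1)])
  moreover have "m - z = (1 / 2) *\<^sub>R (w - z)"
    by (simp add: m_def algebra_simps flip: scaleR_add_left)
  ultimately show ?thesis by (simp add: inner_scaleR_right)
qed

lemma reference_fun_strongly_supports:
  assumes "reference_fun \<psi>"
  shows "strongly_supports (grad \<psi> z) \<psi> z"
proof -
  let ?h = "support_gap \<psi> (grad \<psi> z) z"
  have "convex_on UNIV ?h"
    using assms by (intro convex_on_support_gap) (simp add: reference_fun_def)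
  moreover have "continuous_on UNIV ?h"
    unfolding support_gap_def by (intro continuous_intros reference_fun_continuous[OF assms])
  moreover have "?h z = 0" by (simp add: support_gap_def)
  moreover have "0 < ?h w" if "w \<noteq> z" for w
    using reference_fun_strictly_above_tangent[OF assms that] by (simp add: support_gap_def)
  moreover have "0 \<le> ?h w" for w
    using reference_fun_above_tangent[OF assms, of z w] by (simp add: support_gap_def)
  ultimately show ?thesis
    unfolding strongly_supports_def using convex_linear_growth[of ?h z] by blast
qed

lemma reference_fun_grad_surj:
  assumes "reference_fun \<psi>"
  shows "\<exists>w. grad \<psi> w = g"
proof -
  have "continuous_on UNIV (\<lambda>w. \<psi> w - g \<bullet> w)"
    by (intro continuous_intros reference_fun_continuous[OF assms])
  moreover have "\<exists>R. \<forall>w. R \<le> norm w \<longrightarrow> M \<le> \<psi> w - g \<bullet> w" for M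
  proof -
    obtain R where R: "\<And>w. R \<le> norm w \<Longrightarrow> (norm g + 1) * norm w \<le> \<psi> w"
      using supercoercive_funD assms unfolding reference_fun_def by blast
    have "M \<le> \<psi> w - g \<bullet> w" if "max R M \<le> norm w" for w
      using R[of w] norm_cauchy_schwarz[of g w] that by (simp add: algebra_simps)
    then show ?thesis by blast
  qed
  ultimately obtain w where min: "\<And>w'. \<psi> w - g \<bullet> w \<le> \<psi> w' - g \<bullet> w'"
    using continuous_coercive_attains_min by blast
  have "((\<lambda>w. \<psi> w - g \<bullet> w) has_derivative (\<lambda>h. grad \<psi> w \<bullet> h - g \<bullet> h)) (at w)"
    by (intro has_derivative_diff reference_fun_has_derivative[OF assms]
        bounded_linear_imp_has_derivative bounded_linear_inner_right)
  then have "((\<lambda>w. \<psi> w - g \<bullet> w) has_derivative (\<lambda>h. (grad \<psi> w - g) \<bullet> h)) (at w)"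
    by (simp add: inner_diff_left)
  from this min have "grad \<psi> w - g = 0" by (rule has_derivative_zero_at_minimum)
  then show ?thesis by auto
qed

lemma reference_fun_strongly_supports_conj:
  fixes \<psi> :: "'a::euclidean_space \<Rightarrow> real"
  assumes "reference_fun \<psi>"
  shows "strongly_supports g \<psi> (grad (conj_fun \<psi>) g)"
proof -
  obtain w where w: "grad \<psi> w = g" using reference_fun_grad_surj[OF assms] by blast
  then have "strongly_supports g \<psi> w" using reference_fun_strongly_supports[OF assms] by blast
  moreover from this have "grad (conj_fun \<psi>) g = w" by (rule grad_conj_fun_eqI)
  ultimately show ?thesis by simp
qed

section \<open>Infimal convolution of epi-scaled functions\<close>

(* The value of the split x = y + (x - y) in the infimum defining (a1 \<star> p1) \<box> (a2 \<star> p2) at x. *)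
definition split_cost :: "real \<Rightarrow> ('a::real_vector \<Rightarrow> real) \<Rightarrow> real \<Rightarrow> ('a \<Rightarrow> real) \<Rightarrow> 'a \<Rightarrow> 'a \<Rightarrow> real"
  where "split_cost a1 p1 a2 p2 x y = a1 * p1 (y /\<^sub>R a1) + a2 * p2 ((x - y) /\<^sub>R a2)"

lemma split_cost_swap: "split_cost a1 p1 a2 p2 x y = split_cost a2 p2 a1 p1 x (x - y)"
  by (simp add: split_cost_def add.commute)

lemma split_cost_decompose:
  fixes p1 p2 :: "'a::real_inner \<Rightarrow> real"
  assumes "a1 \<noteq> 0" "a2 \<noteq> 0"
  shows "split_cost a1 p1 a2 p2 x y = a1 * p1 W1 + a2 * p2 W2 + g \<bullet> (x - (a1 *\<^sub>R W1 + a2 *\<^sub>R W2))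
    + a1 * support_gap p1 g W1 (y /\<^sub>R a1) + a2 * support_gap p2 g W2 ((x - y) /\<^sub>R a2)"
  using assms
  by (simp add: split_cost_def support_gap_def inner_diff_right inner_add_right inner_scaleR_right
      field_simps)

lemma continuous_on_split_cost:
  fixes p1 p2 :: "'a::real_normed_vector \<Rightarrow> real"
  assumes "continuous_on UNIV p1" "continuous_on UNIV p2"
  shows "continuous_on UNIV (split_cost a1 p1 a2 p2 x)"
  unfolding split_cost_def[abs_def]
  by (intro continuous_intros continuous_on_compose2[OF assms(1)] continuous_on_compose2[OF assms(2)])
    auto

lemma split_cost_has_derivative:
  fixes p1 p2 :: "'a::real_inner \<Rightarrow> real"
  assumes "a1 \<noteq> 0" "a2 \<noteq> 0"
    and d1: "(p1 has_derivative (\<lambda>h. D1 \<bullet> h)) (at (y /\<^sub>R a1))"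
    and d2: "(p2 has_derivative (\<lambda>h. D2 \<bullet> h)) (at ((x - y) /\<^sub>R a2))"
  shows "(split_cost a1 p1 a2 p2 x has_derivative (\<lambda>h. (D1 - D2) \<bullet> h)) (at y)"
proof -
  have "((\<lambda>y. y /\<^sub>R a1) has_derivative (\<lambda>h. h /\<^sub>R a1)) (at y)"
    by (intro bounded_linear_imp_has_derivative bounded_linear_scaleR_right)
  from has_derivative_compose[OF this d1]
  have c1: "((\<lambda>y. p1 (y /\<^sub>R a1)) has_derivative (\<lambda>h. D1 \<bullet> (h /\<^sub>R a1))) (at y)" .
  have "((\<lambda>y. (x - y) /\<^sub>R a2) has_derivative (\<lambda>h. (0 - h) /\<^sub>R a2)) (at y)"
    by (intro derivative_intros)
  from has_derivative_compose[OF this d2]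
  have c2: "((\<lambda>y. p2 ((x - y) /\<^sub>R a2)) has_derivative (\<lambda>h. D2 \<bullet> ((0 - h) /\<^sub>R a2))) (at y)" .
  have "((\<lambda>y. a1 * p1 (y /\<^sub>R a1) + a2 * p2 ((x - y) /\<^sub>R a2)) has_derivative
      (\<lambda>h. a1 * (D1 \<bullet> (h /\<^sub>R a1)) + a2 * (D2 \<bullet> ((0 - h) /\<^sub>R a2)))) (at y)"
    by (intro has_derivative_add has_derivative_mult_right c1 c2)
  then show ?thesis
    unfolding split_cost_def[abs_def]
    by (rule has_derivative_eq_rhs)
      (use assms in \<open>simp add: fun_eq_iff inner_diff_left inner_scaleR_right mult.assoc[symmetric]\<close>)
qed

lemma split_cost_coercive_bounded_below:
  fixes p1 p2 :: "'a::real_normed_vector \<Rightarrow> real"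
  assumes "0 < a1" "0 < a2" and bounded: "\<And>u. c \<le> p1 u" and coercive: "coercive_fun (\<lambda>u. ereal (p2 u))"
  shows "\<exists>R. \<forall>y. R \<le> norm y \<longrightarrow> M \<le> split_cost a1 p1 a2 p2 x y"
proof -
  obtain R where R: "\<And>u. R \<le> norm u \<Longrightarrow> (M - a1 * c) / a2 \<le> p2 u"
    using coercive_funD[OF coercive] by blast
  have "M \<le> split_cost a1 p1 a2 p2 x y" if y: "norm x + a2 * \<bar>R\<bar> \<le> norm y" for y
  proof -
    have "norm y - norm x \<le> norm (x - y)" by (metis norm_minus_commute norm_triangle_ineq2)
    then have "a2 * \<bar>R\<bar> \<le> norm (x - y)" using y by linarith
    then have "\<bar>R\<bar> \<le> norm (x - y) / a2" using \<open>0 < a2\<close> by (simp add: field_simps)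
    then have "\<bar>R\<bar> \<le> norm ((x - y) /\<^sub>R a2)" using \<open>0 < a2\<close> by (simp add: divide_inverse mult.commute)
    then have "(M - a1 * c) / a2 \<le> p2 ((x - y) /\<^sub>R a2)" by (intro R) linarith
    then have "M - a1 * c \<le> a2 * p2 ((x - y) /\<^sub>R a2)" using \<open>0 < a2\<close> by (simp add: field_simps)
    moreover have "a1 * c \<le> a1 * p1 (y /\<^sub>R a1)" using bounded \<open>0 < a1\<close> by simp
    ultimately show ?thesis by (simp add: split_cost_def)
  qed
  then show ?thesis by blast
qed

lemma split_cost_coercive_supercoercive:
  fixes p1 p2 :: "'a::real_inner \<Rightarrow> real"
  assumes "0 < a1" "0 < a2" and super: "supercoercive_fun (\<lambda>u. ereal (p1 u))"
    and affine: "\<And>u. c + q \<bullet> u \<le> p2 u"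
  shows "\<exists>R. \<forall>y. R \<le> norm y \<longrightarrow> M \<le> split_cost a1 p1 a2 p2 x y"
proof -
  obtain R where R: "\<And>u. R \<le> norm u \<Longrightarrow> (norm q + 1) * norm u \<le> p1 u"
    using supercoercive_funD[OF super] by blast
  have "M \<le> split_cost a1 p1 a2 p2 x y"
    if y: "max (a1 * R) (M - a2 * c + norm q * norm x) \<le> norm y" for y
  proof -
    have "R \<le> norm (y /\<^sub>R a1)" using y \<open>0 < a1\<close> by (simp add: field_simps)
    from R[OF this] have "a1 * ((norm q + 1) * norm (y /\<^sub>R a1)) \<le> a1 * p1 (y /\<^sub>R a1)"
      using \<open>0 < a1\<close> by (intro mult_left_mono) auto
    moreover have "a1 * ((norm q + 1) * norm (y /\<^sub>R a1)) = norm q * norm y + norm y"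
      using \<open>0 < a1\<close> by (simp add: field_simps)
    ultimately have A: "norm q * norm y + norm y \<le> a1 * p1 (y /\<^sub>R a1)" by simp
    have "a2 * (c + q \<bullet> ((x - y) /\<^sub>R a2)) \<le> a2 * p2 ((x - y) /\<^sub>R a2)"
      by (rule mult_left_mono[OF affine]) (use \<open>0 < a2\<close> in simp)
    then have B: "a2 * c + q \<bullet> (x - y) \<le> a2 * p2 ((x - y) /\<^sub>R a2)"
      using \<open>0 < a2\<close> by (simp add: inner_scaleR_right distrib_left mult.assoc[symmetric])
    have "\<bar>q \<bullet> (x - y)\<bar> \<le> norm q * norm (x - y)" by (rule Cauchy_Schwarz_ineq2)
    also have "\<dots> \<le> norm q * (norm x + norm y)" by (intro mult_left_mono norm_triangle_ineq4) simp
    finally have C: "- (norm q * norm x) - norm q * norm y \<le> q \<bullet> (x - y)"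
      by (simp add: algebra_simps abs_le_iff)
    from A B C y show ?thesis by (simp add: split_cost_def)
  qed
  then show ?thesis by blast
qed

lemma split_cost_has_minimizer:
  fixes p1 p2 :: "'a::euclidean_space \<Rightarrow> real"
  assumes "0 < a1" "0 < a2" "continuous_on UNIV p1" "continuous_on UNIV p2"
    and growth: "bounded_below_fun (\<lambda>u. ereal (p1 u)) \<and> coercive_fun (\<lambda>u. ereal (p2 u)) \<or>
      supercoercive_fun (\<lambda>u. ereal (p1 u)) \<and> (\<exists>c q. \<forall>u. c + q \<bullet> u \<le> p2 u)"
  shows "\<exists>y. \<forall>y'. split_cost a1 p1 a2 p2 x y \<le> split_cost a1 p1 a2 p2 x y'"
proof (rule continuous_coercive_attains_min)
  show "continuous_on UNIV (split_cost a1 p1 a2 p2 x)"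
    using assms(3,4) by (rule continuous_on_split_cost)
  show "\<exists>R. \<forall>y. R \<le> norm y \<longrightarrow> M \<le> split_cost a1 p1 a2 p2 x y" for M
    using growth
  proof (elim disjE conjE exE)
    assume "bounded_below_fun (\<lambda>u. ereal (p1 u))" "coercive_fun (\<lambda>u. ereal (p2 u))"
    moreover from this(1) obtain c where "\<And>u. c \<le> p1 u" unfolding bounded_below_fun_def by auto
    ultimately show ?thesis using split_cost_coercive_bounded_below[OF assms(1,2)] by blast
  next
    fix c q assume "supercoercive_fun (\<lambda>u. ereal (p1 u))" "\<forall>u. c + q \<bullet> u \<le> p2 u"
    then show ?thesis using split_cost_coercive_supercoercive[OF assms(1,2)] by blast
  qed
qed

lemma weighted_growth_bound:
  fixes a1 a2 n n1 n2 e1 e2 \<delta>1 \<delta>2 \<epsilon> :: real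
  assumes "0 < a1" "0 < a2" "0 < \<delta>1" "0 < \<delta>2" "0 \<le> e1" "0 \<le> e2"
    and "0 < \<epsilon>" "\<epsilon> \<le> n" "n \<le> a1 * n1 + a2 * n2"
    and "\<epsilon> / (a1 + a2) \<le> n1 \<Longrightarrow> \<delta>1 * n1 \<le> e1" and "\<epsilon> / (a1 + a2) \<le> n2 \<Longrightarrow> \<delta>2 * n2 \<le> e2"
  shows "min (a1 * \<delta>1) (a2 * \<delta>2) / (a1 + a2) * n \<le> a1 * e1 + a2 * e2"
proof -
  \<comment> \<open>the farther of the two pieces carries at least the share 1 / (a1 + a2) of n\<close>
  have larger_part: "min (b1 * d1) (b2 * d2) / (b1 + b2) * n \<le> b1 * f1 + b2 * f2"
    if "0 < b1" "0 < b2" "0 < d1" "0 \<le> f2" "m2 \<le> m1" "n \<le> b1 * m1 + b2 * m2"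
      and "\<epsilon> / (b1 + b2) \<le> m1 \<Longrightarrow> d1 * m1 \<le> f1"
    for b1 b2 d1 d2 m1 m2 f1 f2 :: real
  proof -
    have "b2 * m2 \<le> b2 * m1" using that by simp
    then have n: "n \<le> (b1 + b2) * m1" using that unfolding distrib_right by linarith
    then have "\<epsilon> / (b1 + b2) \<le> m1" using that \<open>\<epsilon> \<le> n\<close> by (simp add: field_simps)
    then have "d1 * m1 \<le> f1" using that by blast
    have "min (b1 * d1) (b2 * d2) / (b1 + b2) * n \<le> b1 * d1 / (b1 + b2) * n"
      using that \<open>0 < \<epsilon>\<close> \<open>\<epsilon> \<le> n\<close> by (intro mult_right_mono divide_right_mono) auto
    also have "\<dots> \<le> b1 * d1 / (b1 + b2) * ((b1 + b2) * m1)"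
      using n that by (intro mult_left_mono) auto
    also have "\<dots> = b1 * (d1 * m1)" using that by simp
    also have "\<dots> \<le> b1 * f1 + b2 * f2"
      using \<open>d1 * m1 \<le> f1\<close> that by (simp add: add_increasing2)
    finally show ?thesis .
  qed
  show ?thesis
  proof (cases "n2 \<le> n1")
    case True
    then show ?thesis using assms by (intro larger_part) auto
  next
    case False
    then have "min (a2 * \<delta>2) (a1 * \<delta>1) / (a2 + a1) * n \<le> a2 * e2 + a1 * e1"
      using assms by (intro larger_part) (auto simp: add.commute)
    then show ?thesis by (simp add: min.commute add.commute)
  qed
qed

locale attained_infconv =
  fixes a1 a2 :: real and p1 p2 :: "'a::euclidean_space \<Rightarrow> real"
  assumes a1_pos: "0 < a1" and a2_pos: "0 < a2"
    and minimizer_exists: "\<And>x. \<exists>y. \<forall>y'. split_cost a1 p1 a2 p2 x y \<le> split_cost a1 p1 a2 p2 x y'"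
begin

abbreviation cost :: "'a \<Rightarrow> 'a \<Rightarrow> real" where "cost \<equiv> split_cost a1 p1 a2 p2"

definition minimizer :: "'a \<Rightarrow> 'a" where
  "minimizer x = (SOME y. \<forall>y'. cost x y \<le> cost x y')"

definition infconv_real :: "'a \<Rightarrow> real" where
  "infconv_real x =
    real_of_ereal (infconv (epi_scale a1 (\<lambda>y. ereal (p1 y))) (epi_scale a2 (\<lambda>y. ereal (p2 y))) x)"

lemma minimizer_le: "cost x (minimizer x) \<le> cost x y"
  using someI_ex[OF minimizer_exists[of x]] unfolding minimizer_def by blast

lemma infconv_eq_cost:
  "infconv (epi_scale a1 (\<lambda>y. ereal (p1 y))) (epi_scale a2 (\<lambda>y. ereal (p2 y))) x
    = ereal (cost x (minimizer x))"
proof -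
  have "infconv (epi_scale a1 (\<lambda>y. ereal (p1 y))) (epi_scale a2 (\<lambda>y. ereal (p2 y))) x
      = (INF y. ereal (cost x y))"
    by (simp add: infconv_def epi_scale_def split_cost_def)
  also have "\<dots> = ereal (cost x (minimizer x))"
  proof (rule antisym)
    show "(INF y. ereal (cost x y)) \<le> ereal (cost x (minimizer x))" by (rule INF_lower) simp
    show "ereal (cost x (minimizer x)) \<le> (INF y. ereal (cost x y))"
      by (rule INF_greatest) (simp add: minimizer_le)
  qed
  finally show ?thesis .
qed

lemma infconv_real_eq: "infconv_real x = cost x (minimizer x)"
  by (simp add: infconv_real_def infconv_eq_cost)

lemma infconv_eq_ereal:
  "infconv (epi_scale a1 (\<lambda>y. ereal (p1 y))) (epi_scale a2 (\<lambda>y. ereal (p2 y)))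
    = (\<lambda>x. ereal (infconv_real x))"
  by (simp add: fun_eq_iff infconv_eq_cost infconv_real_eq)

lemma infconv_real_le: "infconv_real x \<le> cost x y"
  using minimizer_le by (simp add: infconv_real_eq)

lemma support_gap_infconv_real:
  assumes gap1: "\<And>v. 0 \<le> support_gap p1 g W1 v" and gap2: "\<And>v. 0 \<le> support_gap p2 g W2 v"
  shows "infconv_real (a1 *\<^sub>R W1 + a2 *\<^sub>R W2) = a1 * p1 W1 + a2 * p2 W2"
    and "support_gap infconv_real g (a1 *\<^sub>R W1 + a2 *\<^sub>R W2) x
      = a1 * support_gap p1 g W1 (minimizer x /\<^sub>R a1)
        + a2 * support_gap p2 g W2 ((x - minimizer x) /\<^sub>R a2)"
proof -
  define Z where "Z = a1 *\<^sub>R W1 + a2 *\<^sub>R W2"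
  have cost_eq: "cost x y = a1 * p1 W1 + a2 * p2 W2 + g \<bullet> (x - Z) + a1 * support_gap p1 g W1 (y /\<^sub>R a1)
      + a2 * support_gap p2 g W2 ((x - y) /\<^sub>R a2)" for x y
    unfolding Z_def using a1_pos a2_pos by (intro split_cost_decompose) auto
  have Z_value: "infconv_real Z = a1 * p1 W1 + a2 * p2 W2"
  proof (rule antisym)
    show "infconv_real Z \<le> a1 * p1 W1 + a2 * p2 W2"
      using infconv_real_le[of Z "a1 *\<^sub>R W1"] a1_pos a2_pos by (simp add: Z_def split_cost_def)
    show "a1 * p1 W1 + a2 * p2 W2 \<le> infconv_real Z"
      using cost_eq[of Z "minimizer Z"] gap1 gap2 a1_pos a2_pos by (simp add: infconv_real_eq)
  qed
  then show "infconv_real (a1 *\<^sub>R W1 + a2 *\<^sub>R W2) = a1 * p1 W1 + a2 * p2 W2" by (simp add: Z_def)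
  show "support_gap infconv_real g (a1 *\<^sub>R W1 + a2 *\<^sub>R W2) x
      = a1 * support_gap p1 g W1 (minimizer x /\<^sub>R a1)
        + a2 * support_gap p2 g W2 ((x - minimizer x) /\<^sub>R a2)"
    using cost_eq[of x "minimizer x"] Z_value by (simp add: Z_def support_gap_def infconv_real_eq)
qed

lemma infconv_real_strongly_supports:
  assumes S1: "strongly_supports g p1 W1" and S2: "strongly_supports g p2 W2"
  shows "infconv_real (a1 *\<^sub>R W1 + a2 *\<^sub>R W2) = a1 * p1 W1 + a2 * p2 W2"
    and "strongly_supports g infconv_real (a1 *\<^sub>R W1 + a2 *\<^sub>R W2)"
proof -
  define Z where "Z = a1 *\<^sub>R W1 + a2 *\<^sub>R W2"
  note gaps_nonneg = strongly_supports_gap_nonneg[OF S1] strongly_supports_gap_nonneg[OF S2]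
  note gap_eq = support_gap_infconv_real(2)[OF gaps_nonneg, folded Z_def]
  show "infconv_real (a1 *\<^sub>R W1 + a2 *\<^sub>R W2) = a1 * p1 W1 + a2 * p2 W2"
    by (rule support_gap_infconv_real(1)[OF gaps_nonneg])
  have "\<exists>\<delta>>0. \<forall>x. \<epsilon> \<le> norm (x - Z) \<longrightarrow> \<delta> * norm (x - Z) \<le> support_gap infconv_real g Z x"
    if "0 < \<epsilon>" for \<epsilon>
  proof -
    have "0 < \<epsilon> / (a1 + a2)" using that a1_pos a2_pos by simp
    obtain \<delta>1 where "0 < \<delta>1" and grow1: "\<And>v. \<epsilon> / (a1 + a2) \<le> norm (v - W1) \<Longrightarrow>
        \<delta>1 * norm (v - W1) \<le> support_gap p1 g W1 v"
      using strongly_supports_growth[OF S1 \<open>0 < \<epsilon> / (a1 + a2)\<close>] by blast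
    obtain \<delta>2 where "0 < \<delta>2" and grow2: "\<And>v. \<epsilon> / (a1 + a2) \<le> norm (v - W2) \<Longrightarrow>
        \<delta>2 * norm (v - W2) \<le> support_gap p2 g W2 v"
      using strongly_supports_growth[OF S2 \<open>0 < \<epsilon> / (a1 + a2)\<close>] by blast
    have "min (a1 * \<delta>1) (a2 * \<delta>2) / (a1 + a2) * norm (x - Z) \<le> support_gap infconv_real g Z x"
      if x: "\<epsilon> \<le> norm (x - Z)" for x
    proof -
      let ?v1 = "minimizer x /\<^sub>R a1" and ?v2 = "(x - minimizer x) /\<^sub>R a2"
      have "x - Z = a1 *\<^sub>R (?v1 - W1) + a2 *\<^sub>R (?v2 - W2)"
        using a1_pos a2_pos by (simp add: Z_def algebra_simps)
      then have "norm (x - Z) \<le> a1 * norm (?v1 - W1) + a2 * norm (?v2 - W2)"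
        using a1_pos a2_pos by (metis abs_of_pos norm_scaleR norm_triangle_ineq)
      from weighted_growth_bound[OF a1_pos a2_pos \<open>0 < \<delta>1\<close> \<open>0 < \<delta>2\<close> gaps_nonneg \<open>0 < \<epsilon>\<close> x this]
      show ?thesis unfolding gap_eq using grow1 grow2 by blast
    qed
    moreover have "0 < min (a1 * \<delta>1) (a2 * \<delta>2) / (a1 + a2)"
      using a1_pos a2_pos \<open>0 < \<delta>1\<close> \<open>0 < \<delta>2\<close> by simp
    ultimately show ?thesis by blast
  qed
  moreover have "0 \<le> support_gap infconv_real g Z x" for x
    unfolding gap_eq using gaps_nonneg a1_pos a2_pos by simp
  ultimately show "strongly_supports g infconv_real (a1 *\<^sub>R W1 + a2 *\<^sub>R W2)"
    unfolding strongly_supports_def Z_def by blast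
qed

lemma grad_conj_infconv_real:
  assumes "reference_fun p1" "reference_fun p2"
  shows "grad (conj_fun infconv_real) g = a1 *\<^sub>R grad (conj_fun p1) g + a2 *\<^sub>R grad (conj_fun p2) g"
    and "infconv_real (grad (conj_fun infconv_real) g)
      = a1 * p1 (grad (conj_fun p1) g) + a2 * p2 (grad (conj_fun p2) g)"
    and "strongly_supports g infconv_real (grad (conj_fun infconv_real) g)"
proof -
  note supports = infconv_real_strongly_supports[OF
      reference_fun_strongly_supports_conj[OF assms(1)] reference_fun_strongly_supports_conj[OF assms(2)]]
  show grad_eq: "grad (conj_fun infconv_real) g = a1 *\<^sub>R grad (conj_fun p1) g + a2 *\<^sub>R grad (conj_fun p2) g"
    using supports(2) by (rule grad_conj_fun_eqI)
  show "infconv_real (grad (conj_fun infconv_real) g)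
      = a1 * p1 (grad (conj_fun p1) g) + a2 * p2 (grad (conj_fun p2) g)"
    unfolding grad_eq by (rule supports(1))
  show "strongly_supports g infconv_real (grad (conj_fun infconv_real) g)"
    unfolding grad_eq by (rule supports(2))
qed

lemma infconv_real_upper_bound_transfer:
  assumes "attained_infconv a1 a2 q1 q2"
    and up1: "\<And>w. p1 w \<le> p1 (minimizer x0 /\<^sub>R a1) + q1 (w - minimizer x0 /\<^sub>R a1 + W1) - q1 W1"
    and up2: "\<And>w. p2 w \<le> p2 ((x0 - minimizer x0) /\<^sub>R a2)
      + q2 (w - (x0 - minimizer x0) /\<^sub>R a2 + W2) - q2 W2"
  shows "infconv_real x \<le> infconv_real x0
    + attained_infconv.infconv_real a1 a2 q1 q2 (x - x0 + (a1 *\<^sub>R W1 + a2 *\<^sub>R W2))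
    - (a1 * q1 W1 + a2 * q2 W2)"
proof -
  interpret Q: attained_infconv a1 a2 q1 q2 by fact
  let ?y = "minimizer x0" and ?x' = "x - x0 + (a1 *\<^sub>R W1 + a2 *\<^sub>R W2)"
  let ?s = "Q.minimizer ?x'"
  \<comment> \<open>candidate split of x: the optimal split of x0, moved by the optimal q-split of the shifted point\<close>
  let ?y' = "?y + ?s - a1 *\<^sub>R W1"
  have "?y' /\<^sub>R a1 - ?y /\<^sub>R a1 + W1 = ?s /\<^sub>R a1"
    using a1_pos by (simp add: algebra_simps)
  then have "a1 * p1 (?y' /\<^sub>R a1) \<le> a1 * (p1 (?y /\<^sub>R a1) + q1 (?s /\<^sub>R a1) - q1 W1)"
    using up1[of "?y' /\<^sub>R a1"] a1_pos by (intro mult_left_mono) auto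
  moreover have "(x - ?y') /\<^sub>R a2 - (x0 - ?y) /\<^sub>R a2 + W2 = (?x' - ?s) /\<^sub>R a2"
    using a2_pos by (simp add: algebra_simps)
  then have "a2 * p2 ((x - ?y') /\<^sub>R a2)
      \<le> a2 * (p2 ((x0 - ?y) /\<^sub>R a2) + q2 ((?x' - ?s) /\<^sub>R a2) - q2 W2)"
    using up2[of "(x - ?y') /\<^sub>R a2"] a2_pos by (intro mult_left_mono) auto
  moreover have "infconv_real x \<le> cost x ?y'" by (rule infconv_real_le)
  ultimately show ?thesis
    by (simp add: infconv_real_eq Q.infconv_real_eq split_cost_def algebra_simps)
qed

end

lemma attained_infconvI:
  fixes p1 p2 :: "'a::euclidean_space \<Rightarrow> real"
  assumes "0 < a1" "0 < a2" "continuous_on UNIV p1" "continuous_on UNIV p2"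
    and growth: "bounded_below_fun (\<lambda>u. ereal (p1 u)) \<and> coercive_fun (\<lambda>u. ereal (p2 u)) \<or>
      bounded_below_fun (\<lambda>u. ereal (p2 u)) \<and> coercive_fun (\<lambda>u. ereal (p1 u)) \<or>
      supercoercive_fun (\<lambda>u. ereal (p1 u)) \<and> (\<exists>c q. \<forall>u. c + q \<bullet> u \<le> p2 u) \<or>
      supercoercive_fun (\<lambda>u. ereal (p2 u)) \<and> (\<exists>c q. \<forall>u. c + q \<bullet> u \<le> p1 u)"
  shows "attained_infconv a1 a2 p1 p2"
proof
  fix x
  show "\<exists>y. \<forall>y'. split_cost a1 p1 a2 p2 x y \<le> split_cost a1 p1 a2 p2 x y'"
  proof (cases "bounded_below_fun (\<lambda>u. ereal (p1 u)) \<and> coercive_fun (\<lambda>u. ereal (p2 u)) \<or>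
      supercoercive_fun (\<lambda>u. ereal (p1 u)) \<and> (\<exists>c q. \<forall>u. c + q \<bullet> u \<le> p2 u)")
    case True
    then show ?thesis using split_cost_has_minimizer[OF assms(1-4)] by blast
  next
    case False
    with growth obtain y where "\<forall>y'. split_cost a2 p2 a1 p1 x y \<le> split_cost a2 p2 a1 p1 x y'"
      using split_cost_has_minimizer[OF assms(2,1,4,3)] by blast
    then have "\<forall>y'. split_cost a1 p1 a2 p2 x (x - y) \<le> split_cost a1 p1 a2 p2 x y'"
      by (metis split_cost_swap diff_diff_cancel)
    then show ?thesis by blast
  qed
qed (fact assms)+

lemma attained_infconv_reference_fun:
  assumes "0 < a1" "0 < a2" and ref1: "reference_fun \<phi>1" and ref2: "reference_fun \<phi>2"
  shows "attained_infconv a1 a2 \<phi>1 \<phi>2"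
proof (rule attained_infconvI)
  have "supercoercive_fun (\<lambda>u. ereal (\<phi>1 u))" using ref1 by (simp add: reference_fun_def)
  moreover have "\<forall>u. \<phi>2 0 + grad \<phi>2 0 \<bullet> u \<le> \<phi>2 u"
    using reference_fun_above_tangent[OF ref2, of 0] by simp
  ultimately show "bounded_below_fun (\<lambda>u. ereal (\<phi>1 u)) \<and> coercive_fun (\<lambda>u. ereal (\<phi>2 u)) \<or>
      bounded_below_fun (\<lambda>u. ereal (\<phi>2 u)) \<and> coercive_fun (\<lambda>u. ereal (\<phi>1 u)) \<or>
      supercoercive_fun (\<lambda>u. ereal (\<phi>1 u)) \<and> (\<exists>c q. \<forall>u. c + q \<bullet> u \<le> \<phi>2 u) \<or>
      supercoercive_fun (\<lambda>u. ereal (\<phi>2 u)) \<and> (\<exists>c q. \<forall>u. c + q \<bullet> u \<le> \<phi>1 u)"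
    by blast
qed (use assms reference_fun_continuous in auto)

locale convex_smooth_infconv = attained_infconv +
  fixes D1 D2 :: "'a \<Rightarrow> 'a"
  assumes has_derivative1: "\<And>x. (p1 has_derivative (\<lambda>h. D1 x \<bullet> h)) (at x)"
    and has_derivative2: "\<And>x. (p2 has_derivative (\<lambda>h. D2 x \<bullet> h)) (at x)"
    and above_tangent1: "\<And>z w. p1 z + D1 z \<bullet> (w - z) \<le> p1 w"
    and above_tangent2: "\<And>z w. p2 z + D2 z \<bullet> (w - z) \<le> p2 w"
begin

definition infconv_grad :: "'a \<Rightarrow> 'a" where
  "infconv_grad x = D1 (minimizer x /\<^sub>R a1)"

lemma infconv_grad_eq: "infconv_grad x = D2 ((x - minimizer x) /\<^sub>R a2)"
proof -
  have "(cost x has_derivative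
      (\<lambda>h. (D1 (minimizer x /\<^sub>R a1) - D2 ((x - minimizer x) /\<^sub>R a2)) \<bullet> h)) (at (minimizer x))"
    using a1_pos a2_pos by (intro split_cost_has_derivative has_derivative1 has_derivative2) auto
  from has_derivative_zero_at_minimum[OF this minimizer_le] show ?thesis
    by (simp add: infconv_grad_def)
qed

lemma infconv_real_above_tangent: "infconv_real x + infconv_grad x \<bullet> (y - x) \<le> infconv_real y"
proof -
  let ?u1 = "minimizer x /\<^sub>R a1" and ?u2 = "(x - minimizer x) /\<^sub>R a2"
  have x: "a1 *\<^sub>R ?u1 + a2 *\<^sub>R ?u2 = x" using a1_pos a2_pos by simp
  have "0 \<le> support_gap p1 (infconv_grad x) ?u1 v" for v
    using above_tangent1[of ?u1 v] by (simp add: support_gap_def infconv_grad_def)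
  moreover have "0 \<le> support_gap p2 (infconv_grad x) ?u2 v" for v
    using above_tangent2[of ?u2 v] by (simp add: support_gap_def infconv_grad_eq)
  moreover have "infconv_real y = infconv_real x + infconv_grad x \<bullet> (y - x)
      + a1 * support_gap p1 (infconv_grad x) ?u1 (minimizer y /\<^sub>R a1)
      + a2 * support_gap p2 (infconv_grad x) ?u2 ((y - minimizer y) /\<^sub>R a2)"
    using split_cost_decompose[of a1 a2 p1 p2 y "minimizer y" ?u1 ?u2 "infconv_grad x"] a1_pos a2_pos
    unfolding x by (simp add: infconv_real_eq split_cost_def)
  ultimately show ?thesis using a1_pos a2_pos by (simp add: add_nonneg_nonneg)
qed

lemma infconv_real_has_derivative: "(infconv_real has_derivative (\<lambda>h. infconv_grad x \<bullet> h)) (at x)"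
proof (rule has_derivative_squeeze[OF infconv_real_above_tangent _ a1_pos])
  show "infconv_real (x + d) \<le> infconv_real x
      + a1 * (p1 (minimizer x /\<^sub>R a1 + d /\<^sub>R a1) - p1 (minimizer x /\<^sub>R a1))" for d
    using infconv_real_le[of "x + d" "minimizer x + d"]
    by (simp add: infconv_real_eq split_cost_def scaleR_add_right algebra_simps)
  show "(p1 has_derivative (\<lambda>h. infconv_grad x \<bullet> h)) (at (minimizer x /\<^sub>R a1))"
    unfolding infconv_grad_def by (rule has_derivative1)
qed

lemma continuous_on_infconv_grad: "continuous_on UNIV infconv_grad"
  using infconv_real_has_derivative infconv_real_above_tangent by (rule convex_gradient_continuous)

lemma a_smooth_rel_infconv_real:
  assumes Q: "attained_infconv a1 a2 q1 q2" and ref1: "reference_fun q1" and ref2: "reference_fun q2"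
    and upper1: "\<And>u w. p1 w \<le> p1 u + q1 (w - u + grad (conj_fun q1) (D1 u))
      - q1 (grad (conj_fun q1) (D1 u))"
    and upper2: "\<And>u w. p2 w \<le> p2 u + q2 (w - u + grad (conj_fun q2) (D2 u))
      - q2 (grad (conj_fun q2) (D2 u))"
  shows "a_smooth_rel (attained_infconv.infconv_real a1 a2 q1 q2) (\<lambda>x. ereal (infconv_real x))"
proof -
  interpret Q: attained_infconv a1 a2 q1 q2 by fact
  show ?thesis
    unfolding a_smooth_rel_continuously_differentiable_iff[OF infconv_real_has_derivative
        continuous_on_infconv_grad]
  proof (intro conjI allI)
    fix xb x
    let ?g = "infconv_grad xb"
    let ?W1 = "grad (conj_fun q1) ?g" and ?W2 = "grad (conj_fun q2) ?g"
    show "infconv_real xb - Q.infconv_real (x - xb + grad (conj_fun Q.infconv_real) (- ?g))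
        + Q.infconv_real (grad (conj_fun Q.infconv_real) (- ?g)) \<le> infconv_real x"
      using strongly_supports_above_tangent[OF Q.grad_conj_infconv_real(3)[OF ref1 ref2, of "- ?g"],
          of "x - xb + grad (conj_fun Q.infconv_real) (- ?g)"]
        infconv_real_above_tangent[of xb x]
      by (simp add: inner_minus_left)
    have "\<And>w. p1 w \<le> p1 (minimizer xb /\<^sub>R a1) + q1 (w - minimizer xb /\<^sub>R a1 + ?W1) - q1 ?W1"
      using upper1 by (simp add: infconv_grad_def)
    moreover have "\<And>w. p2 w \<le> p2 ((xb - minimizer xb) /\<^sub>R a2)
        + q2 (w - (xb - minimizer xb) /\<^sub>R a2 + ?W2) - q2 ?W2"
      using upper2 by (simp add: infconv_grad_eq)
    ultimately have "infconv_real x \<le> infconv_real xb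
        + Q.infconv_real (x - xb + (a1 *\<^sub>R ?W1 + a2 *\<^sub>R ?W2)) - (a1 * q1 ?W1 + a2 * q2 ?W2)"
      by (rule infconv_real_upper_bound_transfer[OF Q])
    then show "infconv_real x \<le> infconv_real xb
        + Q.infconv_real (x - xb + grad (conj_fun Q.infconv_real) ?g)
        - Q.infconv_real (grad (conj_fun Q.infconv_real) ?g)"
      using Q.grad_conj_infconv_real(2)[OF ref1 ref2, of ?g]
      unfolding Q.grad_conj_infconv_real(1)[OF ref1 ref2] by linarith
  qed
qed

end


lemma convex_smooth_infconvI:
  fixes p1 p2 :: "'a::euclidean_space \<Rightarrow> real"
  assumes "0 < a1" "0 < a2"
    and deriv1: "\<And>x. (p1 has_derivative (\<lambda>h. D1 x \<bullet> h)) (at x)"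
    and deriv2: "\<And>x. (p2 has_derivative (\<lambda>h. D2 x \<bullet> h)) (at x)"
    and tangent1: "\<And>z w. p1 z + D1 z \<bullet> (w - z) \<le> p1 w"
    and tangent2: "\<And>z w. p2 z + D2 z \<bullet> (w - z) \<le> p2 w"
    and growth: "bounded_below_fun (\<lambda>u. ereal (p1 u)) \<and> coercive_fun (\<lambda>u. ereal (p2 u)) \<or>
      bounded_below_fun (\<lambda>u. ereal (p2 u)) \<and> coercive_fun (\<lambda>u. ereal (p1 u)) \<or>
      supercoercive_fun (\<lambda>u. ereal (p1 u)) \<or> supercoercive_fun (\<lambda>u. ereal (p2 u))"
  shows "convex_smooth_infconv a1 a2 p1 p2 D1 D2"
proof (intro convex_smooth_infconv.intro attained_infconvI convex_smooth_infconv_axioms.intro)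
  show "continuous_on UNIV p1" "continuous_on UNIV p2"
    using deriv1 deriv2 has_derivative_continuous by (blast intro: continuous_at_imp_continuous_on)+
  show "bounded_below_fun (\<lambda>u. ereal (p1 u)) \<and> coercive_fun (\<lambda>u. ereal (p2 u)) \<or>
      bounded_below_fun (\<lambda>u. ereal (p2 u)) \<and> coercive_fun (\<lambda>u. ereal (p1 u)) \<or>
      supercoercive_fun (\<lambda>u. ereal (p1 u)) \<and> (\<exists>c q. \<forall>u. c + q \<bullet> u \<le> p2 u) \<or>
      supercoercive_fun (\<lambda>u. ereal (p2 u)) \<and> (\<exists>c q. \<forall>u. c + q \<bullet> u \<le> p1 u)"
    using growth tangent1[of 0] tangent2[of 0] by auto
qed (use assms in auto)

theorem mainTheorem14:
  fixes \<phi>1 \<phi>2 :: "'a::euclidean_space \<Rightarrow> real"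
    and f1 f2 :: "'a \<Rightarrow> ereal"
    and a1 a2 :: real
  assumes ref1: "reference_fun \<phi>1" and ref2: "reference_fun \<phi>2"
    and f1: "proper_fun f1" "lsc_fun f1" "convex_fun f1" "a_smooth_rel \<phi>1 f1"
    and f2: "proper_fun f2" "lsc_fun f2" "convex_fun f2" "a_smooth_rel \<phi>2 f2"
    and a: "a1 > 0" "a2 > 0"
    and growth: "(bounded_below_fun f1 \<and> coercive_fun f2) \<or> (bounded_below_fun f2 \<and> coercive_fun f1)
                 \<or> supercoercive_fun f1 \<or> supercoercive_fun f2"
  shows "a_smooth_rel
           (\<lambda>x. real_of_ereal (infconv (epi_scale a1 (\<lambda>y. ereal (\<phi>1 y)))
                                        (epi_scale a2 (\<lambda>y. ereal (\<phi>2 y))) x))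
           (infconv (epi_scale a1 f1) (epi_scale a2 f2))"
proof -
  obtain fr1 G1 where f1_eq: "f1 = (\<lambda>x. ereal (fr1 x))"
    and d1: "\<And>x. (fr1 has_derivative (\<lambda>h. G1 x \<bullet> h)) (at x)"
    and tangent1: "\<And>z w. fr1 z + G1 z \<bullet> (w - z) \<le> fr1 w"
    and upper1: "\<And>u w. fr1 w \<le> fr1 u + \<phi>1 (w - u + grad (conj_fun \<phi>1) (G1 u))
      - \<phi>1 (grad (conj_fun \<phi>1) (G1 u))"
    using convex_a_smooth_relE[OF f1(4,3)] by blast
  obtain fr2 G2 where f2_eq: "f2 = (\<lambda>x. ereal (fr2 x))"
    and d2: "\<And>x. (fr2 has_derivative (\<lambda>h. G2 x \<bullet> h)) (at x)"
    and tangent2: "\<And>z w. fr2 z + G2 z \<bullet> (w - z) \<le> fr2 w"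
    and upper2: "\<And>u w. fr2 w \<le> fr2 u + \<phi>2 (w - u + grad (conj_fun \<phi>2) (G2 u))
      - \<phi>2 (grad (conj_fun \<phi>2) (G2 u))"
    using convex_a_smooth_relE[OF f2(4,3)] by blast
  interpret F: convex_smooth_infconv a1 a2 fr1 fr2 G1 G2
    using a d1 d2 tangent1 tangent2 growth[unfolded f1_eq f2_eq] by (rule convex_smooth_infconvI)
  have \<Phi>: "attained_infconv a1 a2 \<phi>1 \<phi>2" using a ref1 ref2 by (rule attained_infconv_reference_fun)
  have "a_smooth_rel (attained_infconv.infconv_real a1 a2 \<phi>1 \<phi>2) (\<lambda>x. ereal (F.infconv_real x))"
    using \<Phi> ref1 ref2 upper1 upper2 by (rule F.a_smooth_rel_infconv_real)
  then show ?thesis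
    unfolding f1_eq f2_eq F.infconv_eq_ereal attained_infconv.infconv_real_def[OF \<Phi>, abs_def] .
qed

end
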